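(* Let $S\in\{0,1\}^{m\times n}$. Then (1) the identity $I\in\mathbb R^{m\times m}$ is $S$-consistent; (2) for any invertible $S$-consistent $C,C'\in\mathbb R^{m\times m}$, the product $CC'$ is $S$-consistent; (3) for any invertible $S$-consistent $C$, the inverse $C^{-1}$ is $S$-consistent. Hence the set of invertible $S$-consistent $m\times m$ matrices is a group under matrix multiplication.
   Context: $S$-consistency: for $S\in\{0,1\}^{m\times n}$, $C\in\mathbb R^{m\times m}$ is $S$-consistent iff for all $i,j$: $[\mathbb 1-S(\mathbb 1-S)^\top]^+_{i,j}=0\Rightarrow C_{i,j}=0$, where $[\cdot]^+=\max\{0,\cdot\}$ entrywise and $\mathbb 1$ is an all-ones matrix of appropriate size. *)

theory Defs
  imports "HOL-Analysis.Analysis"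
begin

definition ones_mat :: "real^'n^'m" where
  "ones_mat = (\<chi> i j. 1)"

definition pos_part_mat :: "real^'n^'m \<Rightarrow> real^'n^'m" where
  "pos_part_mat A = (\<chi> i j. max 0 (A $ i $ j))"

definition s_consistent :: "real^'n^'m \<Rightarrow> real^'m^'m \<Rightarrow> bool" where
  "s_consistent S C \<longleftrightarrow>
     (\<forall>i j. pos_part_mat ((ones_mat :: real^'m^'m) - S ** transpose ((ones_mat :: real^'n^'m) - S)) $ i $ j = 0
            \<longrightarrow> C $ i $ j = 0)"

end

theory Submission
  imports Defs
begin

text \<open>For a 0/1 matrix \<open>S\<close>, the entry \<open>(i, j)\<close> of \<open>S (1 - S)\<^sup>T\<close> counts the columns where row \<open>i\<close>
  of \<open>S\<close> has a one and row \<open>j\<close> a zero. Hence \<open>S\<close>-consistency says that \<open>C\<close> is supported on the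
  relation "the support of row \<open>i\<close> is contained in that of row \<open>j\<close>". This relation is a preorder,
  so the matrices supported on it contain the identity and are closed under products; they form
  a linear space, and left multiplication by an invertible \<open>C\<close> in it is an injective linear map
  of this finite-dimensional space into itself, hence onto, so \<open>C\<^sup>-\<^sup>1\<close>, the preimage of the
  identity, lies in it as well.\<close>

definition pattern_matrices :: "('m \<Rightarrow> 'm \<Rightarrow> bool) \<Rightarrow> (real^'m^'m) set" where
  "pattern_matrices R = {C. \<forall>i j. C $ i $ j \<noteq> 0 \<longrightarrow> R i j}"

lemma subspace_pattern_matrices: "subspace (pattern_matrices R)"
  unfolding subspace_def pattern_matrices_def by (auto, metis add.right_neutral)

lemma mat_1_in_pattern_matrices:
  assumes "reflp R"
  shows "mat 1 \<in> pattern_matrices R"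
  using assms by (simp add: pattern_matrices_def mat_def reflpD)

lemma matrix_mul_in_pattern_matrices:
  assumes "transp R" "C \<in> pattern_matrices R" "D \<in> pattern_matrices R"
  shows "C ** D \<in> pattern_matrices R"
  unfolding pattern_matrices_def
proof (intro CollectI allI impI)
  fix i j
  assume "(C ** D) $ i $ j \<noteq> 0"
  then have "(\<Sum>k\<in>UNIV. C $ i $ k * D $ k $ j) \<noteq> 0"
    by (simp add: matrix_matrix_mult_def)
  then obtain k where "C $ i $ k * D $ k $ j \<noteq> 0"
    using sum.not_neutral_contains_not_neutral by blast
  then have "R i k" "R k j"
    using assms(2,3) by (auto simp: pattern_matrices_def)
  then show "R i j"
    using transpD[OF assms(1)] by blast
qed

lemma matrix_inv_eqI:
  fixes A B :: "'a::field^'n^'n"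
  assumes "A ** B = mat 1"
  shows "matrix_inv A = B"
  unfolding matrix_inv_def
proof (rule some_equality)
  show "A ** B = mat 1 \<and> B ** A = mat 1"
    using assms matrix_left_right_inverse by blast
  fix B' assume "A ** B' = mat 1 \<and> B' ** A = mat 1"
  then have "B' ** A = mat 1" ..
  have "B' = B' ** (A ** B)"
    using assms by simp
  also have "\<dots> = (B' ** A) ** B"
    by (rule matrix_mul_assoc)
  finally show "B' = B"
    using \<open>B' ** A = mat 1\<close> by simp
qed

lemma matrix_inv_in_subspace:
  fixes C :: "real^'n^'n"
  assumes "subspace A" "mat 1 \<in> A" "invertible C"
    and closed: "\<And>X. X \<in> A \<Longrightarrow> C ** X \<in> A"
  shows "matrix_inv C \<in> A"
proof -
  define f where "f X = C ** X" for X :: "real^'n^'n"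
  have "linear f"
    unfolding f_def
    by (rule linearI) (simp_all add: matrix_add_ldistrib matrix_scalar_ac scalar_matrix_assoc)
  moreover have "inj_on f (span A)"
  proof (rule inj_onI)
    obtain C' where "C' ** C = mat 1"
      using assms(3) invertible_def by blast
    fix X Y assume "f X = f Y"
    then have "(C' ** C) ** X = (C' ** C) ** Y"
      by (simp add: f_def flip: matrix_mul_assoc)
    then show "X = Y"
      using \<open>C' ** C = mat 1\<close> by simp
  qed
  ultimately have "dim (f ` A) = dim A"
    by (rule dim_image_eq)
  moreover have "f ` A \<subseteq> A"
    using closed unfolding f_def by auto
  ultimately have "f ` A = A"
    using subspace_dim_equal[OF linear_subspace_image[OF \<open>linear f\<close> assms(1)] assms(1)] by simp
  then obtain X where "X \<in> A" "C ** X = mat 1"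
    using assms(2) unfolding f_def by force
  then show ?thesis
    by (simp add: matrix_inv_eqI)
qed

definition row_support_le :: "real^'n^'m \<Rightarrow> 'm \<Rightarrow> 'm \<Rightarrow> bool" where
  "row_support_le S i j \<longleftrightarrow> (\<forall>k. S $ i $ k = 1 \<longrightarrow> S $ j $ k = 1)"

lemma reflp_row_support_le: "reflp (row_support_le S)"
  by (simp add: reflpI row_support_le_def)

lemma transp_row_support_le: "transp (row_support_le S)"
  by (simp add: transp_def row_support_le_def)

lemma consistency_mask_eq_0_iff:
  fixes S :: "real^'n^'m"
  assumes S01: "\<forall>i j. S $ i $ j \<in> {0, 1}"
  shows "pos_part_mat ((ones_mat :: real^'m^'m) - S ** transpose ((ones_mat :: real^'n^'m) - S)) $ i $ j = 0
     \<longleftrightarrow> \<not> row_support_le S i j"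
proof -
  let ?d = "\<lambda>k. S $ i $ k * (1 - S $ j $ k)"
  have entry: "pos_part_mat ((ones_mat :: real^'m^'m) - S ** transpose ((ones_mat :: real^'n^'m) - S)) $ i $ j
      = max 0 (1 - sum ?d UNIV)"
    by (simp add: pos_part_mat_def ones_mat_def matrix_matrix_mult_def transpose_def)
  have d01: "?d k = (if S $ i $ k = 1 \<and> S $ j $ k = 0 then 1 else 0)" for k
    using S01 by (metis diff_self diff_zero insertE mult_1 mult_zero_left mult_zero_right singletonD)
  show ?thesis
  proof (cases "row_support_le S i j")
    case True
    then have "sum ?d UNIV = 0"
      by (intro sum.neutral) (simp add: d01 row_support_le_def)
    then show ?thesis using True entry by simp
  next
    case False
    then obtain k where "S $ i $ k = 1" "S $ j $ k = 0"
      using S01 unfolding row_support_le_def by fastforce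
    then have "1 \<le> sum ?d UNIV"
      using member_le_sum[of k UNIV ?d] by (simp add: d01)
    then show ?thesis using False entry by simp
  qed
qed

lemma s_consistent_iff_pattern_matrices:
  fixes S :: "real^'n^'m"
  assumes "\<forall>i j. S $ i $ j \<in> {0, 1}"
  shows "s_consistent S C \<longleftrightarrow> C \<in> pattern_matrices (row_support_le S)"
  unfolding s_consistent_def pattern_matrices_def
  using consistency_mask_eq_0_iff[OF assms] by blast

theorem mainTheorem5:
  fixes S :: "real^'n^'m"
  assumes "\<forall>i j. S $ i $ j \<in> {0, 1}"
  shows "s_consistent S (mat 1 :: real^'m^'m)
    \<and> (\<forall>C C' :: real^'m^'m. invertible C \<and> invertible C' \<and> s_consistent S C \<and> s_consistent S C'
            \<longrightarrow> s_consistent S (C ** C'))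
    \<and> (\<forall>C :: real^'m^'m. invertible C \<and> s_consistent S C \<longrightarrow> s_consistent S (matrix_inv C))"
proof -
  let ?P = "pattern_matrices (row_support_le S)"
  note consistent_iff = s_consistent_iff_pattern_matrices[OF assms]
  have one: "mat 1 \<in> ?P"
    by (rule mat_1_in_pattern_matrices[OF reflp_row_support_le])
  have mul: "C ** D \<in> ?P" if "C \<in> ?P" "D \<in> ?P" for C D
    using matrix_mul_in_pattern_matrices[OF transp_row_support_le] that .
  have inv: "matrix_inv C \<in> ?P" if "invertible C" "C \<in> ?P" for C
    using matrix_inv_in_subspace[OF subspace_pattern_matrices one] that mul by blast
  show ?thesis
    using one mul inv by (simp add: consistent_iff)
qed

end
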